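(* Let $q=4$ and let $k>0$ be an even integer, and put $e=3k$. Then the polynomial $$g=S_{k+1}^2+S_{2k}^{q^k+1}\in\mathbb{F}_2[x]$$ is a permutation polynomial of $\mathbb{F}_{q^e}=\mathbb{F}_{4^{3k}}$.
   Context: For a prime power $q$, $\mathbb{F}_q$ denotes the finite field with $q$ elements, and $p=\operatorname{char}\mathbb{F}_q$. For a positive integer $m$, $S_m=S_{m,q}=x+x^q+x^{q^2}+\cdots+x^{q^{m-1}}\in\mathbb{F}_p[x]$ (with $q$ fixed, written $S_m$). Powers such as $S_m^2$, $S_m^{q^k+1}$ denote powers of the polynomial $S_m$. A polynomial $f\in\mathbb{F}_Q[x]$ is a permutation polynomial (PP) of $\mathbb{F}_Q$ if the map $c\mapsto f(c)$ is a bijection of $\mathbb{F}_Q$. *)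

theory Defs
  imports "HOL-Computational_Algebra.Polynomial"
begin

definition S_poly :: "nat \<Rightarrow> nat \<Rightarrow> 'a::comm_ring_1 poly" where
  "S_poly q m = (\<Sum>i<m. monom 1 (q ^ i))"

definition permutation_polynomial :: "'a::{field,finite} poly \<Rightarrow> bool" where
  "permutation_polynomial f \<longleftrightarrow> bij (poly f)"

end

theory Submission
  imports Defs
begin

(* Let \<sigma> x = x^4 and \<phi> = \<sigma>^k, an automorphism with \<phi>^3 = id because the field has 4^(3k)
   elements. With T = S_k one has S_(k+1) = T + \<phi> and S_(2k) = T + \<phi> \<circ> T, so
   g x = (T x + \<phi> x)^2 + u * \<phi> u with u = T x + \<phi> (T x). In characteristic two the difference
   g (x + a) - g x is a quadratic expression D in T x, t = T a and \<phi> a, and in D + \<phi> D all terms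
   involving T x cancel, leaving the square (t + \<phi>^2 t + \<phi> a + \<phi>^2 a)^2. So g (x + a) = g x forces
   t + \<phi>^2 t = \<phi> a + \<phi>^2 a; since \<sigma> acts on T by \<sigma> (T a) = T a + a + \<phi> a, applying \<sigma> sends
   this sum to 0, hence t is \<phi>-invariant. Then D = 0 gives t = \<phi> a, whence a = \<phi> a and \<sigma> a = a,
   so t = k * a = 0 for even k, and a = 0. The argument only uses that \<sigma> is an injective ring
   endomorphism of a field of characteristic two with \<sigma>^(3k) = id. *)

lemma of_nat_card_UNIV_eq_0: "of_nat (card (UNIV :: 'a set)) = (0::'a::{ring_1,finite})"
proof -
  have "bij_betw (\<lambda>y. y + 1) (UNIV::'a set) UNIV"
    by (rule bij_betw_byWitness[where f' = "\<lambda>y. y - 1"]) auto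
  then have "(\<Sum>y\<in>UNIV. y + 1) = (\<Sum>y::'a\<in>UNIV. y)"
    by (rule sum.reindex_bij_betw)
  then show ?thesis
    by (simp add: sum.distrib)
qed

lemma power_card_UNIV: "x ^ card (UNIV :: 'a set) = (x::'a::{field,finite})"
proof (cases "x = 0")
  case True
  then show ?thesis by (simp add: power_0_left)
next
  case False
  let ?U = "UNIV - {0::'a}"
  have "bij_betw (\<lambda>y. x * y) ?U ?U"
    by (rule bij_betw_byWitness[where f' = "\<lambda>y. y / x"]) (use False in auto)
  then have "(\<Prod>y\<in>?U. x * y) = (\<Prod>y\<in>?U. y)"
    by (rule prod.reindex_bij_betw)
  then have "x ^ card ?U = 1"
    by (simp add: prod.distrib)
  moreover have "card (UNIV :: 'a set) = Suc (card ?U)"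
    using card_gt_0_iff[of "UNIV :: 'a set"] by (simp add: card_Diff_singleton)
  ultimately show ?thesis
    by (metis power_Suc mult.right_neutral)
qed

lemma funpow_power: "((\<lambda>x. x ^ m) ^^ n) x = (x::'a::monoid_mult) ^ m ^ n"
  by (induction n) (simp_all add: power_mult[symmetric] mult.commute)

lemma poly_S_poly: "poly (S_poly q m) x = (\<Sum>i<m. x ^ q ^ i)"
  by (simp add: S_poly_def poly_sum poly_monom)

lemma char_two_add_self: "(2::'a::comm_ring_1) = 0 \<Longrightarrow> x + x = (0::'a)"
  by (metis mult_2 mult_zero_left)

lemma char_two_add_eq_0_iff: "(2::'a::comm_ring_1) = 0 \<Longrightarrow> x + y = 0 \<longleftrightarrow> x = (y::'a)"
  by (metis add_diff_cancel_left' char_two_add_self diff_add_cancel diff_eq_eq)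

lemma char_two_square_add: "(2::'a::comm_ring_1) = 0 \<Longrightarrow> (x + y) ^ 2 = x ^ 2 + (y::'a) ^ 2"
  by (simp add: power2_sum)

lemma char_two_power_four_add: "(2::'a::comm_ring_1) = 0 \<Longrightarrow> (x + y) ^ 4 = x ^ 4 + (y::'a) ^ 4"
  using power_mult[of "x + y" 2 2] power_mult[of x 2 2] power_mult[of y 2 2]
  by (simp add: char_two_square_add)

locale cyclic_char_two_endomorphism =
  fixes \<sigma> :: "'a::field \<Rightarrow> 'a" and k :: nat
  assumes two_eq_zero: "(2::'a) = 0"
    and add: "\<sigma> (x + y) = \<sigma> x + \<sigma> y"
    and mult: "\<sigma> (x * y) = \<sigma> x * \<sigma> y"
    and inj: "inj \<sigma>"
    and period: "(\<sigma> ^^ (3 * k)) x = x"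
begin

abbreviation \<phi> :: "'a \<Rightarrow> 'a" where "\<phi> \<equiv> \<sigma> ^^ k"

definition S :: "nat \<Rightarrow> 'a \<Rightarrow> 'a" where
  "S m x = (\<Sum>i<m. (\<sigma> ^^ i) x)"

definition g :: "'a \<Rightarrow> 'a" where
  "g x = S (k + 1) x ^ 2 + S (2 * k) x * \<phi> (S (2 * k) x)"

lemma add_self: "x + x = (0::'a)"
  using two_eq_zero by (rule char_two_add_self)

lemma add_eq_0_iff: "x + y = 0 \<longleftrightarrow> x = (y::'a)"
  using two_eq_zero by (rule char_two_add_eq_0_iff)

lemma square_add: "(x + y) ^ 2 = x ^ 2 + (y::'a) ^ 2"
  using two_eq_zero by (rule char_two_square_add)

lemma \<sigma>_zero: "\<sigma> 0 = 0"
  using add[of 0 0] add_self by simp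

lemma iter_add: "(\<sigma> ^^ n) (x + y) = (\<sigma> ^^ n) x + (\<sigma> ^^ n) y"
  by (induction n) (simp_all add: add)

lemma iter_mult: "(\<sigma> ^^ n) (x * y) = (\<sigma> ^^ n) x * (\<sigma> ^^ n) y"
  by (induction n) (simp_all add: mult)

lemma iter_square: "(\<sigma> ^^ n) (x ^ 2) = (\<sigma> ^^ n) x ^ 2"
  by (simp add: power2_eq_square iter_mult)

lemma iter_zero: "(\<sigma> ^^ n) 0 = 0"
  by (induction n) (simp_all add: \<sigma>_zero)

lemma \<phi>_\<phi>_\<phi>: "\<phi> (\<phi> (\<phi> x)) = x"
  using period[of x] by (simp add: numeral_3_eq_3 Nat.funpow_add)

lemma inj_\<phi>: "inj \<phi>"
  by (metis injI \<phi>_\<phi>_\<phi>)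

lemma S_0 [simp]: "S 0 x = 0"
  by (simp add: S_def)

lemma S_Suc: "S (Suc m) x = S m x + (\<sigma> ^^ m) x"
  by (simp add: S_def)

lemma S_add: "S m (x + y) = S m x + S m y"
  by (simp add: S_def iter_add sum.distrib)

lemma S_split: "S (m + n) x = S m x + (\<sigma> ^^ m) (S n x)"
  by (induction n) (simp_all add: S_Suc iter_add iter_zero Nat.funpow_add add.assoc)

lemma \<sigma>_S: "\<sigma> (S m x) = S m x + x + (\<sigma> ^^ m) x"
  by (induction m) (simp_all add: S_Suc add \<sigma>_zero add_self algebra_simps)

lemma g_eq: "g x = (S k x + \<phi> x) ^ 2 + (S k x + \<phi> (S k x)) * (\<phi> (S k x) + \<phi> (\<phi> (S k x)))"
  by (simp add: g_def S_Suc S_split[of k k, folded mult_2] iter_add)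

definition defect :: "'a \<Rightarrow> 'a \<Rightarrow> 'a \<Rightarrow> 'a" where
  "defect s t c = (t + c) ^ 2 + (t + \<phi> t) * (\<phi> t + \<phi> (\<phi> t))
     + (t + \<phi> t) * (\<phi> s + \<phi> (\<phi> s)) + (s + \<phi> s) * (\<phi> t + \<phi> (\<phi> t))"

lemma square_plus_product_add:
  "(p + q) ^ 2 + (u + v) * (u' + v') = (p ^ 2 + u * u') + (q ^ 2 + v * v' + v * u' + u * (v'::'a))"
  by (simp add: square_add algebra_simps)

lemma g_add: "g (x + a) = g x + defect (S k x) (S k a) (\<phi> a)"
proof -
  have "g (x + a) = ((S k x + \<phi> x) + (S k a + \<phi> a)) ^ 2
      + ((S k x + \<phi> (S k x)) + (S k a + \<phi> (S k a)))
        * ((\<phi> (S k x) + \<phi> (\<phi> (S k x))) + (\<phi> (S k a) + \<phi> (\<phi> (S k a))))"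
    by (simp add: g_eq S_add iter_add ac_simps)
  then show ?thesis
    unfolding square_plus_product_add g_eq defect_def .
qed

lemma defect_plus_\<phi>: "defect s t c + \<phi> (defect s t c) = (t + \<phi> (\<phi> t) + c + \<phi> c) ^ 2"
proof -
  define u0 u1 u2 where "u0 = t + \<phi> t" and "u1 = \<phi> t + \<phi> (\<phi> t)" and "u2 = \<phi> (\<phi> t) + t"
  define v0 v1 v2 where "v0 = s + \<phi> s" and "v1 = \<phi> s + \<phi> (\<phi> s)" and "v2 = \<phi> (\<phi> s) + s"
  have "u0 + u2 = u1 + (t + t)" and "v0 + v2 = v1 + (s + s)"
    by (simp_all add: u0_def u1_def u2_def v0_def v1_def v2_def ac_simps)
  then have u: "u0 + u2 = u1" and v: "v0 + v2 = v1"
    by (simp_all add: add_self)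
  have "\<phi> (defect s t c) = (\<phi> t + \<phi> c) ^ 2 + u1 * u2 + u1 * v2 + v1 * u2"
    by (simp add: defect_def u1_def u2_def v1_def v2_def iter_add iter_mult iter_square \<phi>_\<phi>_\<phi>)
  then have "defect s t c + \<phi> (defect s t c)
      = (t + c) ^ 2 + (\<phi> t + \<phi> c) ^ 2 + u1 * (u0 + u2) + v1 * (u0 + u2) + u1 * (v0 + v2)"
    by (simp add: defect_def u0_def u1_def v0_def v1_def algebra_simps)
  also have "\<dots> = (t + c) ^ 2 + (\<phi> t + \<phi> c) ^ 2 + u1 ^ 2"
    by (simp add: u v power2_eq_square mult.commute add.assoc add_self)
  also have "\<dots> = ((t + c) + (\<phi> t + \<phi> c) + u1) ^ 2"
    by (simp add: square_add)
  also have "(t + c) + (\<phi> t + \<phi> c) + u1 = (t + \<phi> (\<phi> t) + c + \<phi> c) + (\<phi> t + \<phi> t)"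
    by (simp add: u1_def ac_simps)
  also have "\<dots> = t + \<phi> (\<phi> t) + c + \<phi> c"
    by (simp add: add_self)
  finally show ?thesis .
qed

lemma defect_eq_0_imp_eq_0:
  assumes defect: "defect s (S k a) (\<phi> a) = 0" and "even k"
  shows "a = 0"
proof -
  define t where "t = S k a"
  have \<sigma>_t: "\<sigma> t = t + a + \<phi> a"
    unfolding t_def by (rule \<sigma>_S)
  have "(t + \<phi> (\<phi> t) + \<phi> a + \<phi> (\<phi> a)) ^ 2 = 0"
    using defect_plus_\<phi>[of s t "\<phi> a"] defect by (simp add: t_def iter_zero)
  then have "(t + \<phi> (\<phi> t)) + (\<phi> a + \<phi> (\<phi> a)) = 0"
    by (simp add: add.assoc)
  then have trace_eq: "t + \<phi> (\<phi> t) = \<phi> a + \<phi> (\<phi> a)"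
    by (simp only: add_eq_0_iff)
  have "\<sigma> (\<phi> (\<phi> t)) = \<phi> (\<phi> (\<sigma> t))"
    by (simp add: funpow_swap1)
  then have "\<sigma> (t + \<phi> (\<phi> t)) = (t + \<phi> (\<phi> t)) + (\<phi> a + \<phi> (\<phi> a)) + (a + a)"
    by (simp add: add \<sigma>_t iter_add \<phi>_\<phi>_\<phi> ac_simps)
  also have "\<dots> = \<sigma> 0"
    by (simp add: trace_eq add_self \<sigma>_zero)
  finally have "\<phi> (\<phi> t) = t"
    using inj by (simp add: inj_eq add_eq_0_iff)
  then have \<phi>_t: "\<phi> t = t"
    by (metis \<phi>_\<phi>_\<phi>)
  have "(t + \<phi> a) ^ 2 = 0"
    using defect by (simp add: defect_def \<phi>_t add_self flip: t_def)
  then have "t = \<phi> a"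
    by (simp add: add_eq_0_iff)
  then have "\<phi> a = a"
    using \<phi>_t inj_\<phi> by (simp add: inj_eq)
  then have "\<sigma> a = a"
    using \<sigma>_t \<open>t = \<phi> a\<close> by (simp add: add_self)
  then have "(\<sigma> ^^ i) a = a" for i
    by (induction i) simp_all
  then have "t = of_nat k * a"
    by (simp add: t_def S_def)
  also have "of_nat k = (0::'a)"
    using \<open>even k\<close> two_eq_zero by (auto elim: evenE)
  finally show "a = 0"
    using \<open>t = \<phi> a\<close> \<open>\<phi> a = a\<close> by simp
qed

lemma inj_g: "even k \<Longrightarrow> inj g"
proof (rule injI)
  fix x y
  assume "even k" and "g x = g y"
  define a where "a = x + y"
  have "y = x + a"
    unfolding a_def by (simp add: add.assoc[symmetric] add_self)
  then have "g x + defect (S k x) (S k a) (\<phi> a) = g x"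
    using \<open>g x = g y\<close> by (simp add: g_add)
  then have "defect (S k x) (S k a) (\<phi> a) = 0"
    by simp
  then have "a = 0"
    using \<open>even k\<close> by (rule defect_eq_0_imp_eq_0)
  then show "x = y"
    unfolding a_def by (simp add: add_eq_0_iff)
qed

end

lemma frobenius_four_cyclic:
  fixes k :: nat
  assumes "k > 0" and card: "card (UNIV :: 'a::{field,finite} set) = 4 ^ (3 * k)"
  shows "cyclic_char_two_endomorphism (\<lambda>x::'a. x ^ 4) k"
proof
  have "(2::'a) ^ (6 * k) = 0"
    using of_nat_card_UNIV_eq_0[where 'a = 'a] by (simp add: card power_mult)
  then show two: "(2::'a) = 0"
    using \<open>k > 0\<close> by simp
  show "(x + y) ^ 4 = x ^ 4 + y ^ 4" for x y :: 'a
    using two by (rule char_two_power_four_add)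
  show "(x * y) ^ 4 = x ^ 4 * y ^ 4" for x y :: 'a
    by (simp add: power_mult_distrib)
  show "inj (\<lambda>x::'a. x ^ 4)"
  proof (rule injI)
    fix x y :: 'a
    assume "x ^ 4 = y ^ 4"
    then have "(x + y) ^ 4 = 0"
      by (simp add: char_two_power_four_add[OF two] char_two_add_self[OF two])
    then show "x = y"
      by (simp add: char_two_add_eq_0_iff[OF two])
  qed
  show "((\<lambda>x::'a. x ^ 4) ^^ (3 * k)) x = x" for x
    using power_card_UNIV[of x] by (simp add: funpow_power card)
qed

theorem theorem2p1:
  fixes k :: nat
  assumes "k > 0" and "even k"
    and "card (UNIV :: 'a::{field,finite} set) = 4 ^ (3 * k)"
  shows "permutation_polynomial
           ((S_poly 4 (k + 1)) ^ 2 + (S_poly 4 (2 * k)) ^ (4 ^ k + 1) :: 'a poly)"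
proof -
  interpret cyclic_char_two_endomorphism "\<lambda>x::'a. x ^ 4" k
    using assms(1,3) by (rule frobenius_four_cyclic)
  have "poly ((S_poly 4 (k + 1)) ^ 2 + (S_poly 4 (2 * k)) ^ (4 ^ k + 1) :: 'a poly) = g"
    by (simp add: fun_eq_iff g_def S_def poly_S_poly funpow_power power_add mult.commute)
  then show ?thesis
    using inj_g[OF \<open>even k\<close>] finite_UNIV_inj_surj[of g]
    by (simp add: permutation_polynomial_def bij_def)
qed

end
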